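(* Let $k$ and $n$ be natural numbers. Then $$A_k(n)=\tfrac12 D_k(n+1),$$ where $A_k(n):=\tfrac12\big(P_1(d,n)+P'_{k-1}(d,n)+P_2(d,n)+P''_{k-1}(d,n)\big)$.
   Context: The partition functions are defined as follows. - $P_1(d,n)$ is the number of partitions of $n$ into distinct parts whose smallest part exceeds $1$. - $P_2(d,n)$ is the number of partitions of $n$ into distinct parts for which the difference between the two smallest parts is at least $2$ (a partition with a single part counts vacuously). - $P'_{k-1}(d,n)$ is the number of partitions of $n$ in which all parts are distinct except that the smallest part is $1$ with multiplicity $k-1$. - $P''_{k-1}(d,n)$ is the number of partitions of $n$ into distinct parts except that the second smallest part appears with multiplicity $k-1$, where the difference between the two smallest parts is $1$. - $D_k(n)$ is the number of partitions of $n$ into non-negative parts (the part $0$ allowed) in which the smallest part appears exactly $k$ times and no other part is repeated, with $D_k(0)=1$. Its generating function is $\sum_{n\ge0}D_k(n)q^n=\sum_{m\ge0}q^{mk}(-q^{m+1};q)_\infty$. *)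

theory Defs
  imports Complex_Main "HOL-Library.Multiset"
begin

definition is_partition :: "nat \<Rightarrow> nat multiset \<Rightarrow> bool" where
  "is_partition n p \<longleftrightarrow> (\<forall>x\<in>#p. 0 < x) \<and> sum_mset p = n"

definition distinct_parts :: "nat multiset \<Rightarrow> bool" where
  "distinct_parts p \<longleftrightarrow> (\<forall>x. count p x \<le> 1)"

definition P1 :: "nat \<Rightarrow> nat" where
  "P1 n = card {p. is_partition n p \<and> distinct_parts p \<and> (\<forall>x\<in>#p. 1 < x)}"

text \<open>P_2(d,n): distinct parts, the two smallest parts differ by at least 2
  (vacuous if there are fewer than two parts).\<close>
definition P2 :: "nat \<Rightarrow> nat" where
  "P2 n = card {p. is_partition n p \<and> distinct_parts p \<and>
     (\<forall>a\<in>#p. \<forall>b\<in>#p. (\<forall>c\<in>#p. a \<le> c) \<and> a < b \<longrightarrow> a + 2 \<le> b)}"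

definition P' :: "nat \<Rightarrow> nat \<Rightarrow> nat" where
  "P' j n = card {p. is_partition n p \<and> count p 1 = j \<and> (\<forall>x. x \<noteq> 1 \<longrightarrow> count p x \<le> 1)}"

definition P'' :: "nat \<Rightarrow> nat \<Rightarrow> nat" where
  "P'' j n = card {p. is_partition n p \<and>
     (\<exists>a. count p a = 1 \<and> count p (a + 1) = j \<and> (\<forall>x<a. count p x = 0) \<and>
          (\<forall>x>a + 1. count p x \<le> 1))}"

text \<open>D_k(n): partitions into non-negative parts (0 allowed) whose smallest part
  occurs exactly k times and no other part is repeated.\<close>
definition D :: "nat \<Rightarrow> nat \<Rightarrow> nat" where
  "D k n = card {p :: nat multiset. sum_mset p = n \<and>
     (\<exists>m. count p m = k \<and> (\<forall>x<m. count p x = 0) \<and> (\<forall>x>m. count p x \<le> 1))}"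

definition A :: "nat \<Rightarrow> nat \<Rightarrow> real" where
  "A k n = (1/2) * real (P1 n + P' (k - 1) n + P2 n + P'' (k - 1) n)"

end

theory Submission
  imports Defs
begin

text \<open>Sort the partitions counted by \<open>D\<^sub>k(n+1)\<close> by their smallest part \<open>m\<close>.
  For \<open>m = 0\<close>, deleting the \<open>k\<close> zeros leaves an arbitrary partition of \<open>n+1\<close> into
  distinct parts. For \<open>m = 1\<close>, removing one part \<open>1\<close> gives the partitions counted by
  \<open>P'\<^sub>k\<^sub>-\<^sub>1(d,n)\<close>; for \<open>m \<ge> 2\<close>, lowering one copy of \<open>m\<close> to \<open>m - 1\<close> gives those counted
  by \<open>P''\<^sub>k\<^sub>-\<^sub>1(d,n)\<close>. The distinct-part partitions of \<open>n+1\<close> split in the same way with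
  multiplicity \<open>1\<close> in place of \<open>k\<close>, and \<open>P\<^sub>1 = P'\<^sub>0\<close>, \<open>P\<^sub>2 = P''\<^sub>0\<close>.\<close>

definition smallest_part_mult :: "nat \<Rightarrow> nat \<Rightarrow> nat multiset \<Rightarrow> bool" where
  "smallest_part_mult m c p \<longleftrightarrow>
     count p m = c \<and> (\<forall>x<m. count p x = 0) \<and> (\<forall>x>m. count p x \<le> 1)"

lemma D_eq_card_smallest_part_mult:
  "D k s = card {p. sum_mset p = s \<and> (\<exists>m. smallest_part_mult m k p)}"
  by (simp add: D_def smallest_part_mult_def)

lemma count_zero_if_partition: "is_partition s p \<Longrightarrow> count p 0 = 0"
  by (auto simp: is_partition_def count_eq_zero_iff)

lemma smallest_part_le:
  assumes "x \<in># p" and "\<forall>y<m. count p y = 0"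
  shows "(m::nat) \<le> x"
  using assms by (metis count_eq_zero_iff not_less)

lemma Min_set_mset_eqI:
  assumes "count p m \<noteq> 0" and "\<forall>x<m. count p x = 0"
  shows "Min (set_mset p) = (m::nat)"
  using assms smallest_part_le by (intro Min_eqI) (auto simp flip: count_eq_zero_iff)

lemma smallest_part_mult_imp_partition:
  assumes "smallest_part_mult m c p" and "0 < m" and "sum_mset p = s"
  shows "is_partition s p"
  using assms smallest_part_le[of _ p m] by (fastforce simp: is_partition_def smallest_part_mult_def)

lemma smallest_part_mult_unique:
  assumes "smallest_part_mult m c p" "smallest_part_mult m' c' p" "0 < c" "0 < c'"
  shows "m = m'"
  using assms by (metis linorder_neqE_nat not_less0 smallest_part_mult_def)

lemma size_le_sum_mset_plus_count_zero: "size p \<le> sum_mset p + count p (0::nat)"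
  by (induction p) auto

lemma finite_sum_mset_count_zero:
  "finite {p::nat multiset. sum_mset p = s \<and> count p 0 = c}"
proof (rule finite_subset)
  show "{p::nat multiset. sum_mset p = s \<and> count p 0 = c} \<subseteq>
        (\<Union>N\<le>s + c. multisets_of_size {..s} N)"
    using size_le_sum_mset_plus_count_zero
    by (fastforce simp: multisets_of_size_def dest!: multi_member_split)
qed auto

lemma finite_partitions: "finite {p. is_partition s p}"
  using finite_sum_mset_count_zero[of s 0]
  by (rule finite_subset[rotated]) (auto simp: is_partition_def count_zero_if_partition)

lemma card_smallest_part_mult_split_zero:
  assumes "0 < k"
  shows "card {p. sum_mset p = s \<and> (\<exists>m. smallest_part_mult m k p)} =
    card {p. sum_mset p = s \<and> smallest_part_mult 0 k p} +
    card {p. is_partition s p \<and> (\<exists>m. smallest_part_mult m k p)}"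
proof -
  have "{p. sum_mset p = s \<and> (\<exists>m. smallest_part_mult m k p)} =
    {p. sum_mset p = s \<and> smallest_part_mult 0 k p} \<union>
    {p. is_partition s p \<and> (\<exists>m. smallest_part_mult m k p)}"
    using smallest_part_mult_imp_partition by (auto simp: is_partition_def) blast
  moreover have "finite {p. sum_mset p = s \<and> smallest_part_mult 0 k p}"
    using finite_sum_mset_count_zero[of s k]
    by (rule finite_subset[rotated]) (auto simp: smallest_part_mult_def)
  moreover have "{p. sum_mset p = s \<and> smallest_part_mult 0 k p} \<inter>
      {p. is_partition s p \<and> (\<exists>m. smallest_part_mult m k p)} = {}"
    using assms by (auto simp: smallest_part_mult_def count_zero_if_partition)
  ultimately show ?thesis
    by (simp add: card_Un_disjoint finite_partitions)
qed

lemma card_partitions_smallest_part_mult_split: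
  assumes "0 < c"
  shows "card {p. is_partition s p \<and> (\<exists>m. smallest_part_mult m c p)} =
    card {p. is_partition s p \<and> smallest_part_mult 1 c p} +
    card {p. is_partition s p \<and> (\<exists>m\<ge>2. smallest_part_mult m c p)}"
proof -
  have "m = 1 \<or> 2 \<le> m" if "smallest_part_mult m c p" "is_partition s p" for m p
  proof -
    have "m \<noteq> 0"
      using that assms count_zero_if_partition[OF that(2)]
      by (cases m) (simp_all add: smallest_part_mult_def)
    then show ?thesis by linarith
  qed
  then have "{p. is_partition s p \<and> (\<exists>m. smallest_part_mult m c p)} =
    {p. is_partition s p \<and> smallest_part_mult 1 c p} \<union>
    {p. is_partition s p \<and> (\<exists>m\<ge>2. smallest_part_mult m c p)}"
    by blast
  moreover have "{p. is_partition s p \<and> smallest_part_mult 1 c p} \<inter>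
    {p. is_partition s p \<and> (\<exists>m\<ge>2. smallest_part_mult m c p)} = {}"
    using assms smallest_part_mult_unique by fastforce
  ultimately show ?thesis
    by (simp add: card_Un_disjoint finite_partitions)
qed

lemma card_smallest_part_zero_eq_distinct_partitions:
  "card {p. sum_mset p = s \<and> smallest_part_mult 0 k p} =
   card {p. is_partition s p \<and> distinct_parts p}"
proof (rule bij_betw_same_card,
    rule bij_betw_byWitness[where f = "filter_mset ((<) 0)" and f' = "\<lambda>q. q + replicate_mset k 0"])
  show "\<forall>p\<in>{p. sum_mset p = s \<and> smallest_part_mult 0 k p}.
      filter_mset ((<) 0) p + replicate_mset k 0 = p"
    by (auto simp: smallest_part_mult_def multiset_eq_iff)
  show "\<forall>q\<in>{p. is_partition s p \<and> distinct_parts p}.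
      filter_mset ((<) 0) (q + replicate_mset k 0) = q"
    by (auto simp: multiset_eq_iff count_zero_if_partition)
  show "filter_mset ((<) 0) ` {p. sum_mset p = s \<and> smallest_part_mult 0 k p} \<subseteq>
      {p. is_partition s p \<and> distinct_parts p}"
  proof clarify
    fix p :: "nat multiset"
    assume "smallest_part_mult 0 k p"
    moreover have "sum_mset (filter_mset ((<) 0) p) = sum_mset p"
      by (induction p) auto
    ultimately show "is_partition (sum_mset p) (filter_mset ((<) 0) p) \<and>
        distinct_parts (filter_mset ((<) 0) p)"
      by (auto simp: is_partition_def distinct_parts_def smallest_part_mult_def)
  qed
  show "(\<lambda>q. q + replicate_mset k 0) ` {p. is_partition s p \<and> distinct_parts p} \<subseteq>
      {p. sum_mset p = s \<and> smallest_part_mult 0 k p}"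
    by (auto simp: smallest_part_mult_def distinct_parts_def count_zero_if_partition)
      (auto simp: is_partition_def)
qed

lemma distinct_partitions_eq_smallest_part_mult_one:
  assumes "0 < s"
  shows "{p. is_partition s p \<and> distinct_parts p} =
    {p. is_partition s p \<and> (\<exists>m. smallest_part_mult m 1 p)}"
proof (intro Collect_cong conj_cong refl iffI)
  fix p assume p: "is_partition s p" "distinct_parts p"
  then have "p \<noteq> {#}" using assms by (auto simp: is_partition_def)
  then have "Min (set_mset p) \<in># p" by simp
  with p(2) show "\<exists>m. smallest_part_mult m 1 p"
    by (intro exI[of _ "Min (set_mset p)"])
      (auto simp: smallest_part_mult_def distinct_parts_def le_Suc_eq not_in_iff[symmetric]
        dest: Min_le[rotated])
next
  fix p assume "is_partition s p" "\<exists>m. smallest_part_mult m 1 p"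
  then show "distinct_parts p"
    by (auto simp: smallest_part_mult_def distinct_parts_def) (metis le_refl linorder_neqE_nat zero_le)
qed

lemma P'_eq_card_smallest_part_one:
  "P' j n = card {p. is_partition (n + 1) p \<and> smallest_part_mult 1 (Suc j) p}"
  (is "_ = card ?R")
  unfolding P'_def
proof (rule bij_betw_same_card,
    rule bij_betw_byWitness[where f = "add_mset 1" and f' = "\<lambda>p. p - {#1#}"])
  let ?L = "{p. is_partition n p \<and> count p 1 = j \<and> (\<forall>x. x \<noteq> 1 \<longrightarrow> count p x \<le> 1)}"
  have one_mem: "1 \<in># p" if "smallest_part_mult 1 (Suc j) p" for p
    using that by (simp add: smallest_part_mult_def flip: count_greater_zero_iff)
  show "\<forall>p\<in>?R. add_mset 1 (p - {#1#}) = p"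
    using one_mem by simp
  show "add_mset 1 ` ?L \<subseteq> ?R"
    by (auto simp: smallest_part_mult_def count_zero_if_partition) (auto simp: is_partition_def)
  show "(\<lambda>p. p - {#1#}) ` ?R \<subseteq> ?L"
  proof (rule image_subsetI)
    fix p assume "p \<in> ?R"
    then have p: "is_partition (n + 1) p" "smallest_part_mult 1 (Suc j) p" by simp_all
    have "sum_mset (p - {#1#}) = n"
      using p one_mem[OF p(2)] by (auto simp: is_partition_def dest!: multi_member_split)
    moreover have "count (p - {#1#}) x \<le> 1" if "x \<noteq> 1" for x
      using p(2) that by (cases "x = 0") (auto simp: smallest_part_mult_def)
    ultimately show "p - {#1#} \<in> ?L"
      using p by (auto simp: is_partition_def smallest_part_mult_def dest: in_diffD)
  qed
qed simp

definition raise_smallest_part :: "nat multiset \<Rightarrow> nat multiset" where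
  "raise_smallest_part p = add_mset (Min (set_mset p) + 1) (p - {#Min (set_mset p)#})"

definition lower_smallest_part :: "nat multiset \<Rightarrow> nat multiset" where
  "lower_smallest_part p = add_mset (Min (set_mset p) - 1) (p - {#Min (set_mset p)#})"

lemma P''_eq_card_smallest_part_ge_two:
  "P'' j n = card {p. is_partition (n + 1) p \<and> (\<exists>m\<ge>2. smallest_part_mult m (Suc j) p)}"
  (is "_ = card ?R")
  unfolding P''_def
proof (rule bij_betw_same_card,
    rule bij_betw_byWitness[where f = raise_smallest_part and f' = lower_smallest_part])
  let ?L = "{p. is_partition n p \<and> (\<exists>a. count p a = 1 \<and> count p (a + 1) = j \<and>
      (\<forall>x<a. count p x = 0) \<and> (\<forall>x>a + 1. count p x \<le> 1))}"
  have raise: "raise_smallest_part p \<in> ?R \<and> lower_smallest_part (raise_smallest_part p) = p"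
    if "p \<in> ?L" for p
  proof -
    obtain a where p: "is_partition n p" "count p a = 1" "count p (a + 1) = j"
      "\<forall>x<a. count p x = 0" "\<forall>x>a + 1. count p x \<le> 1"
      using \<open>p \<in> ?L\<close> by blast
    define q where "q = add_mset (a + 1) (p - {#a#})"
    have "a \<noteq> 0" using p(2) count_zero_if_partition[OF p(1)] by (cases a) auto
    have "a \<in># p" using p(2) by (simp flip: count_greater_zero_iff)
    have "Min (set_mset p) = a" using p(2,4) by (intro Min_set_mset_eqI) auto
    then have "raise_smallest_part p = q" by (simp add: raise_smallest_part_def q_def)
    moreover have q: "smallest_part_mult (a + 1) (Suc j) q"
      using p(2-5) by (auto simp: q_def smallest_part_mult_def)
    moreover have "sum_mset q = n + 1"
      using p(1) \<open>a \<in># p\<close> by (auto simp: q_def is_partition_def dest!: multi_member_split)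
    moreover have "Min (set_mset q) = a + 1"
      using q by (intro Min_set_mset_eqI) (auto simp: smallest_part_mult_def)
    then have "lower_smallest_part q = p"
      using \<open>a \<in># p\<close> by (simp add: lower_smallest_part_def q_def)
    ultimately show ?thesis
      using \<open>a \<noteq> 0\<close> smallest_part_mult_imp_partition[of "a + 1"]
      by (auto intro!: exI[of _ "a + 1"])
  qed
  have lower: "lower_smallest_part q \<in> ?L \<and> raise_smallest_part (lower_smallest_part q) = q"
    if "q \<in> ?R" for q
  proof -
    obtain m where q: "is_partition (n + 1) q" "2 \<le> m" "smallest_part_mult m (Suc j) q"
      using \<open>q \<in> ?R\<close> by blast
    define p where "p = add_mset (m - 1) (q - {#m#})"
    have "m \<in># q" using q(3) by (simp add: smallest_part_mult_def flip: count_greater_zero_iff)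
    have "Min (set_mset q) = m" using q(3) by (intro Min_set_mset_eqI) (auto simp: smallest_part_mult_def)
    then have "lower_smallest_part q = p" by (simp add: lower_smallest_part_def p_def)
    moreover have p: "count p (m - 1) = 1" "count p m = j" "\<forall>x<m - 1. count p x = 0"
      "\<forall>x>m. count p x \<le> 1"
      using q(2,3) by (auto simp: p_def smallest_part_mult_def)
    moreover have "is_partition n p"
      using q \<open>m \<in># q\<close> unfolding p_def is_partition_def by (auto dest!: multi_member_split)
    moreover have "Min (set_mset p) = m - 1" using p(1,3) by (intro Min_set_mset_eqI) auto
    then have "raise_smallest_part p = q"
      using q(2) \<open>m \<in># q\<close> by (simp add: raise_smallest_part_def p_def)
    ultimately show ?thesis
      using q(2) by (auto intro!: exI[of _ "m - 1"])
  qed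
  show "\<forall>p\<in>?L. lower_smallest_part (raise_smallest_part p) = p" using raise by blast
  show "\<forall>q\<in>?R. raise_smallest_part (lower_smallest_part q) = q" using lower by blast
  show "raise_smallest_part ` ?L \<subseteq> ?R" using raise by blast
  show "lower_smallest_part ` ?R \<subseteq> ?L" using lower by blast
qed

lemma P1_eq_P'_zero: "P1 n = P' 0 n"
  unfolding P1_def P'_def
proof (rule arg_cong[where f = card], rule Collect_cong, rule conj_cong[OF refl])
  fix p assume "is_partition n p"
  then have pos: "0 < x" if "x \<in># p" for x
    using that by (simp add: is_partition_def)
  show "distinct_parts p \<and> (\<forall>x\<in>#p. 1 < x) \<longleftrightarrow>
      count p 1 = 0 \<and> (\<forall>x. x \<noteq> 1 \<longrightarrow> count p x \<le> 1)"
  proof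
    assume "distinct_parts p \<and> (\<forall>x\<in>#p. 1 < x)"
    then show "count p 1 = 0 \<and> (\<forall>x. x \<noteq> 1 \<longrightarrow> count p x \<le> 1)"
      by (auto simp: distinct_parts_def count_eq_zero_iff)
  next
    assume p: "count p 1 = 0 \<and> (\<forall>x. x \<noteq> 1 \<longrightarrow> count p x \<le> 1)"
    then have "distinct_parts p"
      unfolding distinct_parts_def by (metis zero_le)
    moreover have "1 < x" if "x \<in># p" for x
      using that p pos[OF that] by (cases "x = 1") (auto simp: count_eq_zero_iff)
    ultimately show "distinct_parts p \<and> (\<forall>x\<in>#p. 1 < x)" by blast
  qed
qed

text \<open>The hypothesis \<open>0 < n\<close> is needed: the empty partition of \<open>0\<close> is counted by \<open>P2\<close>
  (vacuously) but not by \<open>P'' 0\<close>.\<close>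

lemma P2_eq_P''_zero:
  assumes "0 < n"
  shows "P2 n = P'' 0 n"
  unfolding P2_def P''_def
proof (rule arg_cong[where f = card], rule Collect_cong, rule conj_cong[OF refl], rule iffI)
  fix p assume p: "is_partition n p" "distinct_parts p \<and>
    (\<forall>a\<in>#p. \<forall>b\<in>#p. (\<forall>c\<in>#p. a \<le> c) \<and> a < b \<longrightarrow> a + 2 \<le> b)"
  define a where "a = Min (set_mset p)"
  have "p \<noteq> {#}" using p(1) assms by (auto simp: is_partition_def)
  then have "a \<in># p" and a_le: "\<forall>x\<in>#p. a \<le> x" by (simp_all add: a_def)
  have "count p a = 1"
    using p(2) \<open>a \<in># p\<close> by (simp add: distinct_parts_def le_antisym Suc_leI)
  moreover have "count p (a + 1) = 0"
  proof (rule ccontr)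
    assume "count p (a + 1) \<noteq> 0"
    then have "a + 1 \<in># p" by (simp add: count_eq_zero_iff)
    moreover have "(\<forall>c\<in>#p. a \<le> c) \<and> a < a + 1" using a_le by simp
    ultimately have "a + 2 \<le> a + 1" using p(2) \<open>a \<in># p\<close> by blast
    then show False by simp
  qed
  moreover have "\<forall>x<a. count p x = 0"
    using a_le by (auto simp: count_eq_zero_iff)
  moreover have "\<forall>x>a + 1. count p x \<le> 1"
    using p(2) by (simp add: distinct_parts_def)
  ultimately show "\<exists>a. count p a = 1 \<and> count p (a + 1) = 0 \<and>
      (\<forall>x<a. count p x = 0) \<and> (\<forall>x>a + 1. count p x \<le> 1)"
    by blast
next
  fix p assume "is_partition n p" and "\<exists>a. count p a = 1 \<and> count p (a + 1) = 0 \<and>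
      (\<forall>x<a. count p x = 0) \<and> (\<forall>x>a + 1. count p x \<le> 1)"
  then obtain a where a: "count p a = 1" "count p (a + 1) = 0" "\<forall>x<a. count p x = 0"
    "\<forall>x>a + 1. count p x \<le> 1" by blast
  have "count p x \<le> 1" for x
  proof (cases "x \<le> a + 1")
    case True
    then have "x < a \<or> x = a \<or> x = a + 1" by linarith
    then show ?thesis using a(1-3) by auto
  qed (use a(4) in simp)
  then have "distinct_parts p" by (simp add: distinct_parts_def)
  moreover have "a' + 2 \<le> b"
    if "a' \<in># p" "b \<in># p" "\<forall>c\<in>#p. a' \<le> c" "a' < b" for a' b
  proof -
    have a_le: "a \<le> x" if "x \<in># p" for x
      using that a(3) smallest_part_le by blast
    have "a \<in># p" using a(1) by (simp flip: count_greater_zero_iff)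
    then have "a' = a" using that(1,3) a_le by (simp add: le_antisym)
    moreover have "b \<noteq> a + 1" using that(2) a(2) by (metis count_eq_zero_iff)
    ultimately show ?thesis using that(4) by simp
  qed
  ultimately show "distinct_parts p \<and>
    (\<forall>a\<in>#p. \<forall>b\<in>#p. (\<forall>c\<in>#p. a \<le> c) \<and> a < b \<longrightarrow> a + 2 \<le> b)"
    by blast
qed

theorem theorem4:
  fixes k n :: nat
  assumes "2 \<le> k" and "1 \<le> n"
  shows "A k n = (1/2) * real (D k (n + 1))"
proof -
  have "0 < k" "0 < n" using assms by simp_all
  have "card {p. sum_mset p = n + 1 \<and> smallest_part_mult 0 k p} =
      card {p. is_partition (n + 1) p \<and> (\<exists>m. smallest_part_mult m 1 p)}"
    by (simp only: card_smallest_part_zero_eq_distinct_partitions zero_less_Suc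
        distinct_partitions_eq_smallest_part_mult_one)
  also have "\<dots> = P' 0 n + P'' 0 n"
    by (simp add: card_partitions_smallest_part_mult_split P'_eq_card_smallest_part_one
        P''_eq_card_smallest_part_ge_two)
  also have "\<dots> = P1 n + P2 n"
    using \<open>0 < n\<close> by (simp add: P1_eq_P'_zero P2_eq_P''_zero)
  finally have "D k (n + 1) = P1 n + P2 n +
      card {p. is_partition (n + 1) p \<and> (\<exists>m. smallest_part_mult m k p)}"
    using \<open>0 < k\<close> by (simp add: D_eq_card_smallest_part_mult card_smallest_part_mult_split_zero)
  also have "card {p. is_partition (n + 1) p \<and> (\<exists>m. smallest_part_mult m k p)} =
      P' (k - 1) n + P'' (k - 1) n"
    using \<open>0 < k\<close> by (simp add: card_partitions_smallest_part_mult_split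
        P'_eq_card_smallest_part_one P''_eq_card_smallest_part_ge_two)
  finally show ?thesis by (simp add: A_def)
qed

end
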